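(* Let $\Gamma_1,\Gamma_2$ be co-prime integers with $1<\Gamma_1<\Gamma_2$, with Euclidean sequence $\sigma_{-1},\sigma_0,\dots,\sigma_{K+1}$ and numbers $\ddot n_{2,j},\ddot n_{1,j}$ ($1\le j\le K+1$) as defined in the context. Then: If $K=0$: $\ddot n_{2,1}=\Gamma_1-1$ and $\ddot n_{1,1}=\Gamma_2-1$. If $K\ge1$: $\ddot n_{2,K+1}=\Gamma_1-1$, $\ddot n_{1,K+1}=\Gamma_2-1$, and for $1\le j\le K$: $$\ddot n_{2,j}=\begin{cases}\lfloor\Gamma_1/\sigma_1\rfloor & j=1,\\ \lfloor\Gamma_1/\sigma_1\rfloor\lfloor\sigma_1/\sigma_2\rfloor & j=2,\\ \lfloor\sigma_{2p}/\sigma_{2p+1}\rfloor(\ddot n_{2,2p}+1)+\ddot n_{2,2p-1} & j=2p+1,\ p\ge1,\\ \lfloor\sigma_{2p+1}/\sigma_{2p+2}\rfloor\ddot n_{2,2p+1}+\ddot n_{2,2p} & j=2p+2,\ p\ge1,\end{cases}$$ $$\ddot n_{1,j}=\begin{cases}\lfloor\Gamma_2/\Gamma_1\rfloor\lfloor\Gamma_1/\sigma_1\rfloor & j=1,\\ \lfloor\Gamma_2/\Gamma_1\rfloor\lfloor\Gamma_1/\sigma_1\rfloor\lfloor\sigma_1/\sigma_2\rfloor+\lfloor\sigma_1/\sigma_2\rfloor+\lfloor\Gamma_2/\Gamma_1\rfloor & j=2,\\ \lfloor\sigma_{2p}/\sigma_{2p+1}\rfloor\ddot n_{1,2p}+\ddot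 n_{1,2p-1} & j=2p+1,\ p\ge1,\\ \lfloor\sigma_{2p+1}/\sigma_{2p+2}\rfloor(\ddot n_{1,2p+1}+1)+\ddot n_{1,2p} & j=2p+2,\ p\ge1.\end{cases}$$
   Context: $|a|_b$ is the remainder of the integer $a$ modulo the positive integer $b$. Euclidean sequence: $\sigma_{-1}=\Gamma_2$, $\sigma_0=\Gamma_1$, $\sigma_i=|\sigma_{i-2}|_{\sigma_{i-1}}$ for $i\ge1$; $K\ge0$ is the (existing, unique) index with $\sigma_K>1$ and $\sigma_{K+1}=1$. For $1\le n<\Gamma_1$ let $S_{2,n}=\{|t\Gamma_2|_{\Gamma_1}: t=0,1,\dots,n\}$ and let $d_{2,n}$ be the minimum distance between two distinct elements of $S_{2,n}$; for $1\le n<\Gamma_2$ let $S_{1,n}=\{|t\Gamma_1|_{\Gamma_2}: t=0,1,\dots,n\}$ and $d_{1,n}$ the minimum distance between two distinct elements of $S_{1,n}$. For $1\le j\le K+1$ define $\ddot n_{2,j}=\max\{n: 1\le n<\Gamma_1,\ d_{2,n}\ge\sigma_j\}$ and $\ddot n_{1,j}=\max\{n:1\le n<\Gamma_2,\ d_{1,n}\ge\sigma_j\}$. *)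

theory Defs
  imports Main
begin

text \<open>Raw Euclidean sequence: eseq a b 0 = a, eseq a b 1 = b, then remainders.
  With a = Gamma2, b = Gamma1 we get eseq (Suc i) = sigma_i, eseq 0 = sigma_(-1).\<close>
fun eseq :: "nat \<Rightarrow> nat \<Rightarrow> nat \<Rightarrow> nat" where
  "eseq a b 0 = a"
| "eseq a b (Suc 0) = b"
| "eseq a b (Suc (Suc n)) = eseq a b n mod eseq a b (Suc n)"

definition sigma :: "nat \<Rightarrow> nat \<Rightarrow> nat \<Rightarrow> nat" where
  "sigma G1 G2 i = eseq G2 G1 (Suc i)"

definition resid_set :: "nat \<Rightarrow> nat \<Rightarrow> nat \<Rightarrow> nat set" where
  "resid_set a m n = {(t * a) mod m | t. t \<le> n}"

definition mindist :: "nat set \<Rightarrow> nat" where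
  "mindist S = Min {nat \<bar>int x - int y\<bar> | x y. x \<in> S \<and> y \<in> S \<and> x \<noteq> y}"

definition d2 :: "nat \<Rightarrow> nat \<Rightarrow> nat \<Rightarrow> nat" where
  "d2 G1 G2 n = mindist (resid_set G2 G1 n)"

definition d1 :: "nat \<Rightarrow> nat \<Rightarrow> nat \<Rightarrow> nat" where
  "d1 G1 G2 n = mindist (resid_set G1 G2 n)"

definition nn2 :: "nat \<Rightarrow> nat \<Rightarrow> nat \<Rightarrow> nat" where
  "nn2 G1 G2 j = Max {n. 1 \<le> n \<and> n < G1 \<and> d2 G1 G2 n \<ge> sigma G1 G2 j}"

definition nn1 :: "nat \<Rightarrow> nat \<Rightarrow> nat \<Rightarrow> nat" where
  "nn1 G1 G2 j = Max {n. 1 \<le> n \<and> n < G2 \<and> d1 G1 G2 n \<ge> sigma G1 G2 j}"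

end

theory Submission
  imports Defs
begin

text \<open>
  Write e_0 = m, e_1 = a, e_(k+2) = e_k mod e_(k+1) for the Euclidean remainders and Q_k for the
  continuant denominators of a/m. The vectors (Q_n, +-e_n) and (Q_(n+1), -+e_(n+1)) have
  determinant +-m, hence span the lattice of pairs (k, y) with y = k a (mod m). Expanding
  (k, k a mod m) in this basis gives the best-approximation property: for 0 < k < Q_(n+1) the
  residue k a mod m keeps distance at least e_n from 0 and from m, while Q_(n+1) a = +-e_(n+1)
  (mod m). Every distance between two residues of t a with t <= N is the distance of a single
  residue k a mod m, k <= N, from 0 or m; so the largest N for which all these distances are at
  least e_n is Q_(n+1) or Q_(n+1) - 1, according to the side of 0 on which Q_(n+1) a lies. With
  (m, a) = (G2, G1) and (m, a) = (G1, G2 mod G1) the recurrences of the theorem are those of the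
  continuants, and once sigma_(K+1) = 1 every N qualifies.
\<close>

text \<open>\<open>convergent_denom m a (k + 1)\<close> is the denominator of the k-th convergent of
  a/m = [0; e_0 div e_1, e_1 div e_2, ...].\<close>

fun convergent_denom :: "nat \<Rightarrow> nat \<Rightarrow> nat \<Rightarrow> nat" where
  "convergent_denom m a 0 = 0"
| "convergent_denom m a (Suc 0) = 1"
| "convergent_denom m a (Suc (Suc n)) =
     convergent_denom m a n + (eseq m a n div eseq m a (Suc n)) * convergent_denom m a (Suc n)"

text \<open>Signed so that signed_rem m a n = convergent_denom m a n * a (mod m).\<close>

definition signed_rem :: "nat \<Rightarrow> nat \<Rightarrow> nat \<Rightarrow> int" where
  "signed_rem m a n = (if even n then - int (eseq m a n) else int (eseq m a n))"

lemma abs_signed_rem [simp]: "\<bar>signed_rem m a n\<bar> = int (eseq m a n)"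
  by (simp add: signed_rem_def)

lemma signed_rem_mult_nonpos: "signed_rem m a n * signed_rem m a (Suc n) \<le> 0"
  by (simp add: signed_rem_def)

lemma signed_rem_Suc_Suc:
  "signed_rem m a (Suc (Suc n)) =
     signed_rem m a n + int (eseq m a n div eseq m a (Suc n)) * signed_rem m a (Suc n)"
proof -
  have "int (eseq m a n) =
      int (eseq m a n div eseq m a (Suc n)) * int (eseq m a (Suc n)) + int (eseq m a (Suc (Suc n)))"
    by (simp flip: of_nat_mult of_nat_add)
  then show ?thesis
    by (auto simp: signed_rem_def algebra_simps)
qed

lemma signed_rem_cong:
  "\<exists>t. signed_rem m a n = int (convergent_denom m a n) * int a + int m * t"
proof (induction m a n rule: convergent_denom.induct)
  case (1 m a)
  have "signed_rem m a 0 = int (convergent_denom m a 0) * int a + int m * (- 1)"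
    by (simp add: signed_rem_def)
  then show ?case by blast
next
  case (2 m a)
  have "signed_rem m a 1 = int (convergent_denom m a 1) * int a + int m * 0"
    by (simp add: signed_rem_def)
  then show ?case by auto
next
  case (3 m a n)
  then obtain t0 t1 where
    "signed_rem m a n = int (convergent_denom m a n) * int a + int m * t0"
    "signed_rem m a (Suc n) = int (convergent_denom m a (Suc n)) * int a + int m * t1"
    by blast
  then have "signed_rem m a (Suc (Suc n)) = int (convergent_denom m a (Suc (Suc n))) * int a
      + int m * (t0 + int (eseq m a n div eseq m a (Suc n)) * t1)"
    by (simp add: signed_rem_Suc_Suc algebra_simps)
  then show ?case by blast
qed

lemma convergent_denom_det:
  "int (convergent_denom m a n) * signed_rem m a (Suc n)
     - int (convergent_denom m a (Suc n)) * signed_rem m a n = (- 1) ^ n * int m"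
proof (induction n)
  case 0
  then show ?case by (simp add: signed_rem_def)
next
  case (Suc n)
  then show ?case
    by (simp add: signed_rem_Suc_Suc algebra_simps)
qed

lemma convergent_denom_eseq_sum:
  "convergent_denom m a (Suc n) * eseq m a n + convergent_denom m a n * eseq m a (Suc n) = m"
proof (induction n)
  case 0
  then show ?case by simp
next
  case (Suc n)
  let ?q = "eseq m a n div eseq m a (Suc n)"
  have "convergent_denom m a (Suc (Suc n)) * eseq m a (Suc n)
      + convergent_denom m a (Suc n) * eseq m a (Suc (Suc n))
      = convergent_denom m a n * eseq m a (Suc n)
      + convergent_denom m a (Suc n) * (?q * eseq m a (Suc n) + eseq m a (Suc (Suc n)))"
    by (simp only: convergent_denom.simps algebra_simps)
  also have "\<dots> = m"
    using Suc by (simp add: algebra_simps)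
  finally show ?case .
qed

lemma convergent_denom_pos:
  assumes "0 < a" "a \<le> m" "1 \<le> k"
  shows "1 \<le> convergent_denom m a k"
  using assms
proof (induction m a k rule: convergent_denom.induct)
  case (3 m a n)
  show ?case
  proof (cases n)
    case 0
    then show ?thesis using 3 by (simp add: div_greater_zero_iff Suc_le_eq)
  next
    case (Suc n')
    then show ?thesis using 3 by simp
  qed
qed simp_all

lemma eseq_pos_upto:
  assumes "0 < eseq m a n" "0 < eseq m a (Suc n)" "i \<le> Suc n"
  shows "0 < eseq m a i"
  using assms
proof (induction n arbitrary: i)
  case 0
  then show ?case by (cases i) auto
next
  case (Suc n)
  have "0 < eseq m a n"
    using Suc.prems(2) by (auto intro: Nat.gr0I)
  with Suc show ?case
    by (cases "i = Suc (Suc n)") auto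
qed

lemma eseq_Suc_less:
  assumes "a < m" "0 < eseq m a k"
  shows "eseq m a (Suc k) < eseq m a k"
  using assms by (cases k) auto

lemma eseq_antimono:
  assumes "a < m" "\<forall>k\<le>j. 0 < eseq m a k" "i \<le> j"
  shows "eseq m a j \<le> eseq m a i"
  using assms(3)
proof (induction j rule: dec_induct)
  case (step n)
  then have "0 < eseq m a n"
    using assms(2) by simp
  then show ?case
    using eseq_Suc_less[OF assms(1), of n] step.IH by simp
qed simp

lemma abs_combination_ge:
  fixes q0 q1 k al be y0 y1 :: int
  assumes "0 \<le> q0" "1 \<le> k" "k < q1" "k = al * q0 + be * q1" "y0 * y1 \<le> 0"
  shows "\<bar>y0\<bar> \<le> \<bar>al * y0 + be * y1\<bar>"
proof -
  have "al \<noteq> 0"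
  proof
    assume "al = 0"
    then have "k = be * q1" using assms(4) by simp
    then show False
      using assms(2,3) by (smt (verit) mult_le_cancel_right1 mult_nonpos_nonneg)
  qed
  have "al * be \<le> 0"
  proof (rule ccontr)
    assume "\<not> al * be \<le> 0"
    then have "(0 < al \<and> 0 < be) \<or> (al < 0 \<and> be < 0)"
      unfolding not_le zero_less_mult_iff .
    then show False
      using assms(1-4) by (smt (verit) mult_le_cancel_right1 mult_nonneg_nonneg mult_nonpos_nonneg)
  qed
  then have "0 \<le> (al * y0) * (be * y1)"
    using assms(5) mult_nonpos_nonpos[of "al * be" "y0 * y1"] by (simp add: ac_simps)
  then have "\<bar>al * y0 + be * y1\<bar> = \<bar>al * y0\<bar> + \<bar>be * y1\<bar>"
    by (smt (verit) mult_nonneg_nonpos mult_nonpos_nonneg zero_le_mult_iff)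
  moreover have "\<bar>y0\<bar> \<le> \<bar>al * y0\<bar>"
  proof -
    have "1 \<le> \<bar>al\<bar>"
      using \<open>al \<noteq> 0\<close> by linarith
    then show ?thesis
      using mult_right_mono[of 1 "\<bar>al\<bar>" "\<bar>y0\<bar>"] by (simp add: abs_mult)
  qed
  ultimately show ?thesis by simp
qed

lemma lattice_coords:
  fixes k y t :: int
  assumes "0 < m" "y = k * int a + int m * t"
  obtains al be where
    "k = al * int (convergent_denom m a n) + be * int (convergent_denom m a (Suc n))"
    "y = al * signed_rem m a n + be * signed_rem m a (Suc n)"
proof -
  let ?q0 = "int (convergent_denom m a n)" and ?q1 = "int (convergent_denom m a (Suc n))"
  obtain t0 t1 where
    t0: "signed_rem m a n = ?q0 * int a + int m * t0" and
    t1: "signed_rem m a (Suc n) = ?q1 * int a + int m * t1"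
    using signed_rem_cong by metis
  define ep where "ep = ?q0 * t1 - ?q1 * t0"
  have "int m * ep = (- 1) ^ n * int m"
    using convergent_denom_det[of m a n] unfolding t0 t1 ep_def by (simp add: algebra_simps)
  then have "ep = (- 1) ^ n"
    using assms(1) by simp
  then have ep2: "ep * ep = 1"
    by (simp flip: power2_eq_square power_mult)
  define al where "al = ep * (k * t1 - ?q1 * t)"
  define be where "be = ep * (?q0 * t - k * t0)"
  have "al * ?q0 + be * ?q1 = (ep * ep) * k"
    unfolding al_def be_def ep_def by algebra
  moreover have "al * signed_rem m a n + be * signed_rem m a (Suc n) = (ep * ep) * y"
    unfolding t0 t1 assms(2) al_def be_def ep_def by algebra
  ultimately show ?thesis
    using ep2 by (metis mult_1 that)
qed

lemma best_approx_int:
  fixes y t :: int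
  assumes "0 < m" "1 \<le> k" "k < convergent_denom m a (Suc n)" "y = int k * int a + int m * t"
  shows "int (eseq m a n) \<le> \<bar>y\<bar>"
proof -
  obtain al be where
    k: "int k = al * int (convergent_denom m a n) + be * int (convergent_denom m a (Suc n))" and
    y: "y = al * signed_rem m a n + be * signed_rem m a (Suc n)"
    using lattice_coords[OF assms(1,4)] .
  have "\<bar>signed_rem m a n\<bar> \<le> \<bar>y\<bar>"
    unfolding y using assms(2,3) k signed_rem_mult_nonpos
    by (intro abs_combination_ge[where k = "int k"]) simp_all
  then show ?thesis
    by simp
qed

lemma best_approx:
  assumes "0 < m" "1 \<le> k" "k < convergent_denom m a (Suc n)"
  shows "eseq m a n \<le> k * a mod m" "eseq m a n \<le> m - k * a mod m"
proof -
  have "int (k * a mod m) = int k * int a + int m * - int (k * a div m)"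
    by (simp add: algebra_simps flip: of_nat_mult of_nat_add)
  moreover have "int (k * a mod m) - int m = int k * int a + int m * (- int (k * a div m) - 1)"
    using calculation by (simp add: algebra_simps)
  moreover have "k * a mod m < m"
    using assms(1) by simp
  ultimately show "eseq m a n \<le> k * a mod m" "eseq m a n \<le> m - k * a mod m"
    using best_approx_int[OF assms] by fastforce+
qed

lemma convergent_denom_mult_mod:
  assumes "0 < eseq m a n" "eseq m a n < m"
  shows "convergent_denom m a n * a mod m = (if odd n then eseq m a n else m - eseq m a n)"
proof -
  obtain t where "signed_rem m a n = int (convergent_denom m a n) * int a + int m * t"
    using signed_rem_cong by metis
  then have "int (convergent_denom m a n * a) mod int m = signed_rem m a n mod int m"
    by (simp add: algebra_simps)
  then show ?thesis
    using assms
    by (auto simp: signed_rem_def zmod_zminus1_eq_if of_nat_mod [symmetric] simp del: of_nat_mult)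
qed

lemma finite_dist_set:
  "finite S \<Longrightarrow> finite {nat \<bar>int x - int y\<bar> | x y. x \<in> S \<and> y \<in> S \<and> x \<noteq> y}"
  by (auto intro: finite_subset[OF _ finite_imageI[OF finite_cartesian_product]])

lemma mindist_le:
  assumes "finite S" "x \<in> S" "y \<in> S" "x \<noteq> y"
  shows "mindist S \<le> nat \<bar>int x - int y\<bar>"
  unfolding mindist_def using assms by (intro Min_le finite_dist_set) auto

lemma mindist_geI:
  assumes "finite S" "x \<in> S" "y \<in> S" "x \<noteq> y"
    and "\<And>x y. x \<in> S \<Longrightarrow> y \<in> S \<Longrightarrow> x \<noteq> y \<Longrightarrow> s \<le> nat \<bar>int x - int y\<bar>"
  shows "s \<le> mindist S"
  unfolding mindist_def using assms by (subst Min_ge_iff) (auto intro: finite_dist_set)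

lemma finite_resid_set: "finite (resid_set a m n)"
proof -
  have "resid_set a m n = (\<lambda>t. t * a mod m) ` {..n}"
    by (auto simp: resid_set_def)
  then show ?thesis by simp
qed

lemma mult_mod_in_resid_set: "t \<le> n \<Longrightarrow> t * a mod m \<in> resid_set a m n"
  unfolding resid_set_def by blast

lemma resid_set_mod: "resid_set (a mod m) m n = resid_set a m n"
  unfolding resid_set_def by (simp add: mod_mult_right_eq)

lemma resid_set_dist_ge:
  assumes "0 < m" "t1 < t2" "t2 \<le> n"
    and far: "\<And>k. 1 \<le> k \<Longrightarrow> k \<le> n \<Longrightarrow> s \<le> k * a mod m"
    and far': "\<And>k. 1 \<le> k \<Longrightarrow> k < n \<Longrightarrow> s \<le> m - k * a mod m"
  shows "s \<le> nat \<bar>int (t1 * a mod m) - int (t2 * a mod m)\<bar>"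
proof -
  define k where "k = t2 - t1"
  define x where "x = t1 * a mod m"
  define r where "r = k * a mod m"
  have k: "1 \<le> k" "k \<le> n"
    using assms(2,3) unfolding k_def by linarith+
  have "t2 = t1 + k"
    using assms(2) unfolding k_def by linarith
  then have t2: "t2 * a mod m = (x + r) mod m"
    unfolding x_def r_def by (simp add: add_mult_distrib mod_add_eq)
  have "x < m" "r < m"
    using assms(1) by (simp_all add: x_def r_def)
  show ?thesis
  proof (cases "x + r < m")
    case True
    then show ?thesis
      using t2 far[OF k] by (simp add: x_def r_def)
  next
    case False
    have "t1 \<noteq> 0"
    proof
      assume "t1 = 0"
      then show False
        using False \<open>r < m\<close> by (simp add: x_def)
    qed
    then have "k < n"
      using assms(2,3) unfolding k_def by linarith
    have "t2 * a mod m = (x + r - m) mod m"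
      using t2 False by (simp add: le_mod_geq)
    also have "\<dots> = x + r - m"
      using \<open>x < m\<close> \<open>r < m\<close> by (intro mod_less) linarith
    finally show ?thesis
      using False far'[OF k(1) \<open>k < n\<close>] \<open>r < m\<close> by (simp add: x_def r_def)
  qed
qed

lemma resid_set_mindist_ge:
  assumes "0 < a" "a < m" "1 \<le> n"
    and "\<And>k. 1 \<le> k \<Longrightarrow> k \<le> n \<Longrightarrow> s \<le> k * a mod m"
    and "\<And>k. 1 \<le> k \<Longrightarrow> k < n \<Longrightarrow> s \<le> m - k * a mod m"
  shows "s \<le> mindist (resid_set a m n)"
proof (rule mindist_geI[OF finite_resid_set])
  show "0 * a mod m \<in> resid_set a m n" "1 * a mod m \<in> resid_set a m n"
    using assms(3) by (simp_all only: mult_mod_in_resid_set)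
  show "0 * a mod m \<noteq> 1 * a mod m"
    using assms(1,2) by simp
  fix x y
  assume "x \<in> resid_set a m n" "y \<in> resid_set a m n" "x \<noteq> y"
  then obtain t1 t2 where t: "t1 \<le> n" "t2 \<le> n"
    and xy: "x = t1 * a mod m" "y = t2 * a mod m"
    unfolding resid_set_def by auto
  with \<open>x \<noteq> y\<close> have "t1 \<noteq> t2"
    by auto
  have "0 < m"
    using assms(1,2) by linarith
  consider "t1 < t2" | "t2 < t1"
    using \<open>t1 \<noteq> t2\<close> by linarith
  then show "s \<le> nat \<bar>int x - int y\<bar>"
  proof cases
    case 1
    then show ?thesis
      unfolding xy using resid_set_dist_ge[OF \<open>0 < m\<close> _ t(2) assms(4,5)] by blast
  next
    case 2
    then have "s \<le> nat \<bar>int y - int x\<bar>"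
      unfolding xy using resid_set_dist_ge[OF \<open>0 < m\<close> _ t(1) assms(4,5)] by blast
    then show ?thesis
      by (simp add: abs_minus_commute)
  qed
qed

definition max_sep_len :: "nat \<Rightarrow> nat \<Rightarrow> nat \<Rightarrow> nat" where
  "max_sep_len m a s = Max {n. 1 \<le> n \<and> n < m \<and> s \<le> mindist (resid_set a m n)}"

lemma max_sep_lenI:
  assumes "1 \<le> k" "k < m" "s \<le> mindist (resid_set a m k)"
    and "\<And>n. k < n \<Longrightarrow> n < m \<Longrightarrow> mindist (resid_set a m n) < s"
  shows "max_sep_len m a s = k"
  unfolding max_sep_len_def
proof (rule Max_eqI)
  show "finite {n. 1 \<le> n \<and> n < m \<and> s \<le> mindist (resid_set a m n)}"
    by (rule finite_subset[of _ "{..<m}"]) auto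
  show "k \<in> {n. 1 \<le> n \<and> n < m \<and> s \<le> mindist (resid_set a m n)}"
    using assms(1-3) by simp
next
  fix n
  assume "n \<in> {n. 1 \<le> n \<and> n < m \<and> s \<le> mindist (resid_set a m n)}"
  then have "n < m" "s \<le> mindist (resid_set a m n)"
    by simp_all
  then show "n \<le> k"
    using assms(4)[of n] by (cases "k < n") simp_all
qed

lemma max_sep_len_le_one:
  assumes "0 < a" "a < m" "s \<le> 1"
  shows "max_sep_len m a s = m - 1"
proof (rule max_sep_lenI)
  show "s \<le> mindist (resid_set a m (m - 1))"
  proof (rule mindist_geI[OF finite_resid_set])
    show "0 * a mod m \<in> resid_set a m (m - 1)" "1 * a mod m \<in> resid_set a m (m - 1)"
      using assms(1,2) by (intro mult_mod_in_resid_set; linarith)+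
    show "0 * a mod m \<noteq> 1 * a mod m"
      using assms(1,2) by simp
  qed (use assms(3) in auto)
qed (use assms in auto)

context
  fixes m a n :: nat
  assumes a_pos: "0 < a" and a_less: "a < m" and n_pos: "1 \<le> n"
    and eseq_gt_1: "1 < eseq m a n" and eseq_Suc_pos: "0 < eseq m a (Suc n)"
begin

lemma eseq_Suc_bounds: "eseq m a (Suc n) < eseq m a n" "eseq m a (Suc n) \<le> a"
proof -
  have pos: "\<forall>k\<le>Suc n. 0 < eseq m a k"
    using eseq_pos_upto eseq_gt_1 eseq_Suc_pos by (metis less_trans zero_less_one)
  show "eseq m a (Suc n) < eseq m a n"
    using eseq_Suc_less[OF a_less] eseq_gt_1 by simp
  show "eseq m a (Suc n) \<le> a"
    using eseq_antimono[OF a_less pos, of 1] n_pos by simp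
qed

lemma convergent_denom_Suc_bounds:
  "1 \<le> convergent_denom m a (Suc n)" "convergent_denom m a (Suc n) < m"
  "eseq m a n + eseq m a (Suc n) \<le> m"
proof -
  let ?Q = "convergent_denom m a (Suc n)" and ?Q' = "convergent_denom m a n"
  have sum: "?Q * eseq m a n + ?Q' * eseq m a (Suc n) = m"
    by (rule convergent_denom_eseq_sum)
  have "1 \<le> ?Q" "1 \<le> ?Q'"
    using a_pos a_less n_pos by (intro convergent_denom_pos; simp)+
  then have "eseq m a n \<le> ?Q * eseq m a n" "eseq m a (Suc n) \<le> ?Q' * eseq m a (Suc n)"
    by simp_all
  moreover have "2 * ?Q \<le> ?Q * eseq m a n"
    using eseq_gt_1 by simp
  ultimately show "1 \<le> ?Q" "?Q < m" "eseq m a n + eseq m a (Suc n) \<le> m"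
    using sum \<open>1 \<le> ?Q\<close> by linarith+
qed

lemma max_sep_len_odd:
  assumes "odd n"
  shows "max_sep_len m a (eseq m a n) = convergent_denom m a (Suc n)"
proof -
  let ?e = "eseq m a n" and ?e' = "eseq m a (Suc n)" and ?Q = "convergent_denom m a (Suc n)"
  have "0 < m"
    using a_pos a_less by linarith
  note Q = convergent_denom_Suc_bounds and e' = eseq_Suc_bounds
  have rQ: "?Q * a mod m = m - ?e'"
    using convergent_denom_mult_mod[of m a "Suc n"] assms eseq_Suc_pos e' a_less by simp
  show ?thesis
  proof (rule max_sep_lenI)
    show "?e \<le> mindist (resid_set a m ?Q)"
    proof (rule resid_set_mindist_ge[OF a_pos a_less Q(1)])
      fix k
      assume "1 \<le> k" "k \<le> ?Q"
      then show "?e \<le> k * a mod m"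
        using best_approx(1)[OF \<open>0 < m\<close>] rQ Q(3) by (cases "k = ?Q") simp_all
    next
      fix k
      assume "1 \<le> k" "k < ?Q"
      then show "?e \<le> m - k * a mod m"
        using best_approx(2)[OF \<open>0 < m\<close>] by simp
    qed
  next
    fix n'
    assume "?Q < n'" "n' < m"
    have "Suc ?Q * a mod m = (?Q * a + a) mod m"
      by (simp add: add.commute)
    also have "\<dots> = (?Q * a mod m + a) mod m"
      by (rule mod_add_left_eq[symmetric])
    also have "\<dots> = a - ?e'"
      using rQ e' a_less by (simp add: le_mod_geq)
    finally have "Suc ?Q * a mod m = a - ?e'" .
    moreover have "1 * a mod m = a"
      using a_less by simp
    ultimately have "mindist (resid_set a m n') \<le> ?e'"
      using mindist_le[OF finite_resid_set mult_mod_in_resid_set mult_mod_in_resid_set,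
          of 1 n' "Suc ?Q" a m] \<open>?Q < n'\<close> Q(1) e' eseq_Suc_pos by simp
    then show "mindist (resid_set a m n') < ?e"
      using e'(1) by linarith
  qed (use Q in simp_all)
qed

lemma max_sep_len_even:
  assumes "even n"
  shows "max_sep_len m a (eseq m a n) = convergent_denom m a (Suc n) - 1"
proof -
  let ?e = "eseq m a n" and ?e' = "eseq m a (Suc n)" and ?Q = "convergent_denom m a (Suc n)"
  have "0 < m"
    using a_pos a_less by linarith
  note Q = convergent_denom_Suc_bounds and e' = eseq_Suc_bounds
  have rQ: "?Q * a mod m = ?e'"
    using convergent_denom_mult_mod[of m a "Suc n"] assms eseq_Suc_pos e' a_less by simp
  have "2 \<le> ?Q"
  proof -
    obtain n' where n': "n = Suc (Suc n')"
      using assms n_pos by (metis One_nat_def Suc_n_not_le_n dvd_refl not0_implies_Suc odd_one)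
    have "0 < eseq m a (Suc n')"
      using eseq_pos_upto[OF _ eseq_Suc_pos, of "Suc n'"] eseq_gt_1 n' by simp
    then have "eseq m a n \<le> eseq m a (Suc n')"
      using eseq_Suc_less[OF a_less] n' by (simp add: less_imp_le)
    then have "1 \<le> eseq m a (Suc n') div eseq m a n"
      using eseq_gt_1 by (simp add: div_greater_zero_iff Suc_le_eq)
    moreover have "1 \<le> convergent_denom m a (Suc n')" "1 \<le> convergent_denom m a n"
      using a_pos a_less n' by (intro convergent_denom_pos; simp)+
    moreover have "?Q = convergent_denom m a (Suc n')
        + (eseq m a (Suc n') div eseq m a n) * convergent_denom m a n"
      using n' by simp
    ultimately show ?thesis
      using one_le_mult_iff[of "eseq m a (Suc n') div eseq m a n" "convergent_denom m a n"]
      by linarith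
  qed
  show ?thesis
  proof (rule max_sep_lenI)
    show "?e \<le> mindist (resid_set a m (?Q - 1))"
      using best_approx[OF \<open>0 < m\<close>] \<open>2 \<le> ?Q\<close>
      by (intro resid_set_mindist_ge[OF a_pos a_less]) simp_all
  next
    fix n'
    assume "?Q - 1 < n'" "n' < m"
    then have "mindist (resid_set a m n') \<le> ?e'"
      using mindist_le[OF finite_resid_set mult_mod_in_resid_set mult_mod_in_resid_set,
          of 0 n' ?Q a m] rQ eseq_Suc_pos by simp
    then show "mindist (resid_set a m n') < ?e"
      using e'(1) by linarith
  qed (use Q \<open>2 \<le> ?Q\<close> in simp_all)
qed

end

lemma eseq_mod_shift: "eseq a (m mod a) n = eseq m a (Suc n)"
proof -
  have "eseq a (m mod a) n = eseq m a (Suc n) \<and> eseq a (m mod a) (Suc n) = eseq m a (Suc (Suc n))"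
    by (induction n) simp_all
  then show ?thesis ..
qed

lemma nn1_eq_max_sep_len: "nn1 G1 G2 j = max_sep_len G2 G1 (sigma G1 G2 j)"
  unfolding nn1_def max_sep_len_def d1_def ..

lemma nn2_eq_max_sep_len: "nn2 G1 G2 j = max_sep_len G1 (G2 mod G1) (sigma G1 G2 j)"
  unfolding nn2_def max_sep_len_def d2_def resid_set_mod ..

locale euclid_chain =
  fixes G1 G2 K :: nat
  assumes one_less_G1: "1 < G1" and G1_less_G2: "G1 < G2"
    and sigma_K: "1 < sigma G1 G2 K" and sigma_Suc_K: "sigma G1 G2 (K + 1) = 1"
begin

abbreviation "\<sigma> \<equiv> sigma G1 G2"

definition den2 :: "nat \<Rightarrow> nat" where
  "den2 j = convergent_denom G1 (G2 mod G1) j"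

definition den1 :: "nat \<Rightarrow> nat" where
  "den1 j = convergent_denom G2 G1 (Suc j)"

lemma eseq_pos: "i \<le> K + 2 \<Longrightarrow> 0 < eseq G2 G1 i"
  using eseq_pos_upto[of G2 G1 "Suc K" i] sigma_K sigma_Suc_K by (simp add: sigma_def)

lemma sigma_pos: "j \<le> K + 1 \<Longrightarrow> 0 < \<sigma> j"
  using eseq_pos[of "Suc j"] by (simp add: sigma_def)

lemma sigma_gt_1:
  assumes "j \<le> K"
  shows "1 < \<sigma> j"
proof -
  have "eseq G2 G1 (Suc K) \<le> eseq G2 G1 (Suc j)"
    using assms eseq_pos by (intro eseq_antimono[OF G1_less_G2]) simp_all
  then show ?thesis
    using sigma_K by (simp add: sigma_def)
qed

lemma sigma_0: "\<sigma> 0 = G1"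
  by (simp add: sigma_def)

lemma G2_mod_G1_pos: "0 < G2 mod G1"
  using sigma_pos[of 1] by (simp add: sigma_def numeral_2_eq_2)

lemma den2_0: "den2 0 = 0" and den2_1: "den2 1 = 1"
  by (simp_all add: den2_def)

lemma den1_0: "den1 0 = 1" and den1_1: "den1 1 = G2 div G1"
  by (simp_all add: den1_def)

lemma den2_rec: "den2 (j + 2) = den2 j + (\<sigma> j div \<sigma> (j + 1)) * den2 (j + 1)"
  by (simp add: den2_def eseq_mod_shift sigma_def)

lemma den1_rec: "den1 (j + 2) = den1 j + (\<sigma> j div \<sigma> (j + 1)) * den1 (j + 1)"
  by (simp add: den1_def sigma_def)

lemma den2_pos: "1 \<le> j \<Longrightarrow> 1 \<le> den2 j"
  unfolding den2_def using G2_mod_G1_pos one_less_G1 by (intro convergent_denom_pos) simp_all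

lemma den1_pos: "1 \<le> den1 j"
  unfolding den1_def using one_less_G1 G1_less_G2 by (intro convergent_denom_pos) simp_all

lemma nn1_eq_den1:
  assumes "1 \<le> j" "j \<le> K"
  shows "nn1 G1 G2 j = (if even j then den1 (j + 1) else den1 (j + 1) - 1)"
proof -
  have hyps: "0 < G1" "G1 < G2" "1 \<le> Suc j" "1 < eseq G2 G1 (Suc j)"
    "0 < eseq G2 G1 (Suc (Suc j))"
    using one_less_G1 G1_less_G2 sigma_gt_1[OF assms(2)] sigma_pos[of "Suc j"] assms(2)
    by (simp_all add: sigma_def)
  have "nn1 G1 G2 j = max_sep_len G2 G1 (eseq G2 G1 (Suc j))"
    by (simp add: nn1_eq_max_sep_len sigma_def)
  then show ?thesis
    using max_sep_len_odd[OF hyps] max_sep_len_even[OF hyps] by (simp add: den1_def)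
qed

lemma nn2_eq_den2:
  assumes "1 \<le> j" "j \<le> K"
  shows "nn2 G1 G2 j = (if odd j then den2 (j + 1) else den2 (j + 1) - 1)"
proof -
  have hyps: "0 < G2 mod G1" "G2 mod G1 < G1" "1 \<le> j" "1 < eseq G1 (G2 mod G1) j"
    "0 < eseq G1 (G2 mod G1) (Suc j)"
    using G2_mod_G1_pos one_less_G1 sigma_gt_1[OF assms(2)] sigma_pos[of "Suc j"] assms
    by (simp_all add: sigma_def eseq_mod_shift)
  have "nn2 G1 G2 j = max_sep_len G1 (G2 mod G1) (eseq G1 (G2 mod G1) j)"
    by (simp add: nn2_eq_max_sep_len sigma_def eseq_mod_shift)
  then show ?thesis
    using max_sep_len_odd[OF hyps] max_sep_len_even[OF hyps] by (simp add: den2_def)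
qed

lemma nn1_last: "nn1 G1 G2 (K + 1) = G2 - 1"
  using max_sep_len_le_one[of G1 G2] one_less_G1 G1_less_G2 sigma_Suc_K
  by (simp add: nn1_eq_max_sep_len)

lemma nn2_last: "nn2 G1 G2 (K + 1) = G1 - 1"
  using max_sep_len_le_one[of "G2 mod G1" G1] G2_mod_G1_pos one_less_G1 sigma_Suc_K
  by (simp add: nn2_eq_max_sep_len)

lemma nn2_one: "1 \<le> K \<Longrightarrow> nn2 G1 G2 1 = G1 div \<sigma> 1"
  using nn2_eq_den2[of 1] den2_rec[of 0] den2_0 den2_1 sigma_0 by simp

lemma nn1_one: "1 \<le> K \<Longrightarrow> nn1 G1 G2 1 = (G2 div G1) * (G1 div \<sigma> 1)"
  using nn1_eq_den1[of 1] den1_rec[of 0] den1_0 den1_1 sigma_0 by simp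

lemma nn2_two:
  "2 \<le> K \<Longrightarrow> nn2 G1 G2 2 = (G1 div \<sigma> 1) * (\<sigma> 1 div \<sigma> 2)"
  using nn2_eq_den2[of 2] den2_rec[of 0] den2_rec[of 1] den2_0 den2_1 sigma_0
  by (simp add: numeral_2_eq_2 numeral_3_eq_3)

lemma nn1_two:
  "2 \<le> K \<Longrightarrow> nn1 G1 G2 2 = (G2 div G1) * (G1 div \<sigma> 1) * (\<sigma> 1 div \<sigma> 2)
      + (\<sigma> 1 div \<sigma> 2) + (G2 div G1)"
  using nn1_eq_den1[of 2] den1_rec[of 0] den1_rec[of 1] den1_0 den1_1 sigma_0
  by (simp add: numeral_2_eq_2 numeral_3_eq_3 algebra_simps)

lemma nn2_odd_step:
  assumes "1 \<le> p" "2 * p + 1 \<le> K"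
  shows "nn2 G1 G2 (2 * p + 1) = (\<sigma> (2 * p) div \<sigma> (2 * p + 1)) * (nn2 G1 G2 (2 * p) + 1)
    + nn2 G1 G2 (2 * p - 1)"
  using nn2_eq_den2[of "2 * p + 1"] nn2_eq_den2[of "2 * p"] nn2_eq_den2[of "2 * p - 1"]
    den2_rec[of "2 * p"] den2_pos[of "2 * p + 1"] assms
  by simp

lemma nn1_odd_step:
  assumes "1 \<le> p" "2 * p + 1 \<le> K"
  shows "nn1 G1 G2 (2 * p + 1) = (\<sigma> (2 * p) div \<sigma> (2 * p + 1)) * nn1 G1 G2 (2 * p)
    + nn1 G1 G2 (2 * p - 1)"
  using nn1_eq_den1[of "2 * p + 1"] nn1_eq_den1[of "2 * p"] nn1_eq_den1[of "2 * p - 1"]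
    den1_rec[of "2 * p"] den1_pos[of "2 * p"] assms
  by simp

lemma nn2_even_step:
  assumes "1 \<le> p" "2 * p + 2 \<le> K"
  shows "nn2 G1 G2 (2 * p + 2) = (\<sigma> (2 * p + 1) div \<sigma> (2 * p + 2)) * nn2 G1 G2 (2 * p + 1)
    + nn2 G1 G2 (2 * p)"
  using nn2_eq_den2[of "2 * p + 2"] nn2_eq_den2[of "2 * p + 1"] nn2_eq_den2[of "2 * p"]
    den2_rec[of "2 * p + 1"] den2_pos[of "2 * p + 1"] assms
  by simp

lemma nn1_even_step:
  assumes "1 \<le> p" "2 * p + 2 \<le> K"
  shows "nn1 G1 G2 (2 * p + 2) = (\<sigma> (2 * p + 1) div \<sigma> (2 * p + 2)) * (nn1 G1 G2 (2 * p + 1) + 1)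
    + nn1 G1 G2 (2 * p)"
  using nn1_eq_den1[of "2 * p + 2"] nn1_eq_den1[of "2 * p + 1"] nn1_eq_den1[of "2 * p"]
    den1_rec[of "2 * p + 1"] den1_pos[of "2 * p + 2"] assms
  by simp

end

theorem lemma6:
  fixes G1 G2 K :: nat
  assumes "coprime G1 G2" and "1 < G1" and "G1 < G2"
    and "sigma G1 G2 K > 1" and "sigma G1 G2 (K + 1) = 1"
  shows "(K = 0 \<longrightarrow> nn2 G1 G2 1 = G1 - 1 \<and> nn1 G1 G2 1 = G2 - 1)
    \<and> (K \<ge> 1 \<longrightarrow>
        nn2 G1 G2 (K + 1) = G1 - 1
      \<and> nn1 G1 G2 (K + 1) = G2 - 1
      \<and> nn2 G1 G2 1 = G1 div sigma G1 G2 1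
      \<and> nn1 G1 G2 1 = (G2 div G1) * (G1 div sigma G1 G2 1)
      \<and> (2 \<le> K \<longrightarrow>
           nn2 G1 G2 2 = (G1 div sigma G1 G2 1) * (sigma G1 G2 1 div sigma G1 G2 2)
         \<and> nn1 G1 G2 2 = (G2 div G1) * (G1 div sigma G1 G2 1) * (sigma G1 G2 1 div sigma G1 G2 2)
                          + (sigma G1 G2 1 div sigma G1 G2 2) + (G2 div G1))
      \<and> (\<forall>p\<ge>1. 2 * p + 1 \<le> K \<longrightarrow>
           nn2 G1 G2 (2 * p + 1) = (sigma G1 G2 (2 * p) div sigma G1 G2 (2 * p + 1))
                                     * (nn2 G1 G2 (2 * p) + 1) + nn2 G1 G2 (2 * p - 1)
         \<and> nn1 G1 G2 (2 * p + 1) = (sigma G1 G2 (2 * p) div sigma G1 G2 (2 * p + 1))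
                                     * nn1 G1 G2 (2 * p) + nn1 G1 G2 (2 * p - 1))
      \<and> (\<forall>p\<ge>1. 2 * p + 2 \<le> K \<longrightarrow>
           nn2 G1 G2 (2 * p + 2) = (sigma G1 G2 (2 * p + 1) div sigma G1 G2 (2 * p + 2))
                                     * nn2 G1 G2 (2 * p + 1) + nn2 G1 G2 (2 * p)
         \<and> nn1 G1 G2 (2 * p + 2) = (sigma G1 G2 (2 * p + 1) div sigma G1 G2 (2 * p + 2))
                                     * (nn1 G1 G2 (2 * p + 1) + 1) + nn1 G1 G2 (2 * p)))"
proof -
  interpret euclid_chain G1 G2 K
    using assms(2-5) by unfold_locales simp_all
  show ?thesis
    using nn2_last nn1_last nn2_one nn1_one nn2_two nn1_two
      nn2_odd_step nn1_odd_step nn2_even_step nn1_even_step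
    by auto
qed

end
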